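(* There is an absolute constant $C>0$ such that for every $n\ge 2$ and every Boolean function $f:\{0,1\}^n\times\{0,1\}^n\to\{0,1\}$, $$Q^{\parallel}(f)\le C\cdot 2^{R^{\parallel,pub}(f)}\log n .$$
   Context: All protocols compute $f$ with error probability at most $1/3$ on every input. $Q^{\parallel}(f)$ is the minimal total number of qubits communicated in a quantum simultaneous-message-passing (SMP) protocol for $f$ with no shared randomness and no shared entanglement: Alice (holding $x$) and Bob (holding $y$) each send one quantum message to a referee who holds no input and outputs the answer. $R^{\parallel,pub}(f)$ is the minimal total number of bits communicated in a classical SMP protocol for $f$ in which Alice and Bob share an unlimited amount of public randomness (not counted in the cost); the referee does not see the shared randomness except through the messages. *)

theory Defs
  imports "Jordan_Normal_Form.Conjugate" "Jordan_Normal_Form.Matrix"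
    "HOL-Probability.Probability_Mass_Function"
begin

definition mtrace :: "complex mat \<Rightarrow> complex" where
  "mtrace A = (\<Sum>i<dim_row A. A $$ (i, i))"

definition hermitian_mat :: "nat \<Rightarrow> complex mat \<Rightarrow> bool" where
  "hermitian_mat d A \<longleftrightarrow> A \<in> carrier_mat d d \<and>
     (\<forall>i<d. \<forall>j<d. A $$ (i, j) = cnj (A $$ (j, i)))"

definition psd_mat :: "nat \<Rightarrow> complex mat \<Rightarrow> bool" where
  "psd_mat d A \<longleftrightarrow> hermitian_mat d A \<and>
     (\<forall>v \<in> carrier_vec d. Re (conjugate v \<bullet> (A *\<^sub>v v)) \<ge> 0)"

definition density_op :: "nat \<Rightarrow> complex mat \<Rightarrow> bool" where
  "density_op d \<rho> \<longleftrightarrow> psd_mat d \<rho> \<and> mtrace \<rho> = 1"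

text \<open>Element M of a two-outcome POVM {M, I - M}: 0 <= M <= I.\<close>
definition povm_elem :: "nat \<Rightarrow> complex mat \<Rightarrow> bool" where
  "povm_elem d M \<longleftrightarrow> psd_mat d M \<and> psd_mat d (1\<^sub>m d - M)"

definition kron :: "complex mat \<Rightarrow> complex mat \<Rightarrow> complex mat" where
  "kron A B = Matrix.mat (dim_row A * dim_row B) (dim_col A * dim_col B)
     (\<lambda>(i, j). A $$ (i div dim_row B, j div dim_col B) * B $$ (i mod dim_row B, j mod dim_col B))"

text \<open>Alice sends a qa-qubit state rho x
  (a density operator on dimension 2^qa), Bob a qb-qubit state sigma y; the referee performs
  a two-outcome measurement {M, I - M} on the product state rho x (x) sigma y and outputs 1
  with probability Re (tr (M (rho x (x) sigma y))).\<close>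
definition quantum_smp_protocol ::
  "nat \<Rightarrow> (bool list \<Rightarrow> bool list \<Rightarrow> bool) \<Rightarrow> nat \<Rightarrow> nat \<Rightarrow>
   (bool list \<Rightarrow> complex mat) \<Rightarrow> (bool list \<Rightarrow> complex mat) \<Rightarrow> complex mat \<Rightarrow> bool" where
  "quantum_smp_protocol n f qa qb \<rho> \<sigma> M \<longleftrightarrow>
     (\<forall>x. length x = n \<longrightarrow> density_op (2 ^ qa) (\<rho> x)) \<and>
     (\<forall>y. length y = n \<longrightarrow> density_op (2 ^ qb) (\<sigma> y)) \<and>
     povm_elem (2 ^ (qa + qb)) M \<and>
     (\<forall>x y. length x = n \<longrightarrow> length y = n \<longrightarrow>
        (let p1 = Re (mtrace (M * kron (\<rho> x) (\<sigma> y))) in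
         (if f x y then p1 else 1 - p1) \<ge> 2 / 3))"

definition Q_smp :: "nat \<Rightarrow> (bool list \<Rightarrow> bool list \<Rightarrow> bool) \<Rightarrow> nat" where
  "Q_smp n f = (LEAST q. \<exists>qa qb \<rho> \<sigma> M. qa + qb = q \<and> quantum_smp_protocol n f qa qb \<rho> \<sigma> M)"

text \<open>Public randomness is a random seed r drawn from an (arbitrary discrete) distribution R;
  Alice sends the ca-bit string A x r, Bob the cb-bit string B y r; the referee, who does not
  see r, outputs according to (possibly privately randomized) g on the two messages.\<close>
definition pub_smp_protocol ::
  "nat \<Rightarrow> (bool list \<Rightarrow> bool list \<Rightarrow> bool) \<Rightarrow> nat \<Rightarrow> nat \<Rightarrow> nat pmf \<Rightarrow>
   (bool list \<Rightarrow> nat \<Rightarrow> bool list) \<Rightarrow> (bool list \<Rightarrow> nat \<Rightarrow> bool list) \<Rightarrow>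
   (bool list \<Rightarrow> bool list \<Rightarrow> bool pmf) \<Rightarrow> bool" where
  "pub_smp_protocol n f ca cb R A B g \<longleftrightarrow>
     (\<forall>x r. length x = n \<longrightarrow> length (A x r) = ca) \<and>
     (\<forall>y r. length y = n \<longrightarrow> length (B y r) = cb) \<and>
     (\<forall>x y. length x = n \<longrightarrow> length y = n \<longrightarrow>
        measure_pmf.prob (bind_pmf R (\<lambda>r. g (A x r) (B y r))) {f x y} \<ge> 2 / 3)"

definition R_smp_pub :: "nat \<Rightarrow> (bool list \<Rightarrow> bool list \<Rightarrow> bool) \<Rightarrow> nat" where
  "R_smp_pub n f = (LEAST c. \<exists>ca cb R A B g. ca + cb = c \<and> pub_smp_protocol n f ca cb R A B g)"

end

theory Submission
  imports Defs "HOL-Probability.Hoeffding"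
begin

text \<open>
  Take an optimal public-coin protocol with c = ca + cb bits. If 2^c \<ge> n, the players simply
  send their inputs as basis states. Otherwise, by Newman's argument m = O(n) fixed public seeds
  preserve a constant gap between 1- and 0-inputs. For each seed, the referee's acceptance
  probability G(a, b) on messages a, b is, up to the factor 2^(-l/2) with l = min ca cb, the inner
  product of unit vectors u(a), w(b) of dimension 2^(l+1). Alice sends the superposition of
  u(A(x, \<omega> i)) over the seeds, Bob that of w(B(y, \<omega> i)); their inner product is the average
  acceptance probability times 2^(-l/2). A swap test accepts with probability (1 + <\<psi>, \<phi>>^2)/2,
  so O(4^l) \<le> O(2^c) copies and a threshold decide f, at the cost of O(2^c log n) qubits.
  All states and measurements are real, so positivity reduces to real symmetric idempotents.
\<close>

section \<open>Real pure-state protocols\<close>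

definition real_mat :: "nat \<Rightarrow> (nat \<Rightarrow> nat \<Rightarrow> real) \<Rightarrow> complex mat" where
  "real_mat d P = Matrix.mat d d (\<lambda>(i, j). complex_of_real (P i j))"

definition real_projection :: "nat \<Rightarrow> (nat \<Rightarrow> nat \<Rightarrow> real) \<Rightarrow> bool" where
  "real_projection d P \<longleftrightarrow> (\<forall>i<d. \<forall>j<d. P i j = P j i \<and> (\<Sum>h<d. P i h * P h j) = P i j)"

definition unit_vector :: "nat \<Rightarrow> (nat \<Rightarrow> real) \<Rightarrow> bool" where
  "unit_vector d \<psi> \<longleftrightarrow> (\<Sum>i<d. (\<psi> i)\<^sup>2) = 1"

definition quadratic_form :: "nat \<Rightarrow> (nat \<Rightarrow> nat \<Rightarrow> real) \<Rightarrow> (nat \<Rightarrow> real) \<Rightarrow> real" where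
  "quadratic_form d P v = (\<Sum>i<d. \<Sum>j<d. v i * P i j * v j)"

definition tensor_vec :: "nat \<Rightarrow> (nat \<Rightarrow> real) \<Rightarrow> (nat \<Rightarrow> real) \<Rightarrow> nat \<Rightarrow> real" where
  "tensor_vec d \<psi> \<phi> i = \<psi> (i div d) * \<phi> (i mod d)"

lemma real_mat_carrier [simp]: "real_mat d P \<in> carrier_mat d d"
  and dim_row_real_mat [simp]: "dim_row (real_mat d P) = d"
  and dim_col_real_mat [simp]: "dim_col (real_mat d P) = d"
  by (simp_all add: real_mat_def)

lemma index_real_mat [simp]: "i < d \<Longrightarrow> j < d \<Longrightarrow> real_mat d P $$ (i, j) = complex_of_real (P i j)"
  by (simp add: real_mat_def)

lemma conjugate_scalar_prod_real_mat:
  assumes "v \<in> carrier_vec d"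
  shows "conjugate v \<bullet> (real_mat d P *\<^sub>v v) = (\<Sum>i<d. cnj (v $ i) * (\<Sum>j<d. complex_of_real (P i j) * v $ j))"
  using assms by (simp add: scalar_prod_def conjugate_complex_def atLeast0LessThan)

lemma real_projection_sym: "real_projection d P \<Longrightarrow> i < d \<Longrightarrow> j < d \<Longrightarrow> P i j = P j i"
  unfolding real_projection_def by blast

lemma real_projection_eq_transpose_mult:
  assumes "real_projection d P" "i < d" "j < d"
  shows "P i j = (\<Sum>h<d. P h i * P h j)"
proof -
  have "(\<Sum>h<d. P i h * P h j) = P i j"
    using assms unfolding real_projection_def by blast
  then have "P i j = (\<Sum>h<d. P i h * P h j)" ..
  also have "\<dots> = (\<Sum>h<d. P h i * P h j)"
    using assms by (intro sum.cong refl) (metis lessThan_iff real_projection_sym)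
  finally show ?thesis .
qed

text \<open>v* P v = v* P^T P v = |P v|^2.\<close>
lemma conjugate_scalar_prod_real_projection:
  fixes v :: "complex Matrix.vec"
  assumes P: "real_projection d P" and v: "v \<in> carrier_vec d"
  defines "u \<equiv> \<lambda>h. \<Sum>j<d. complex_of_real (P h j) * v $ j"
  shows "conjugate v \<bullet> (real_mat d P *\<^sub>v v) = (\<Sum>h<d. cnj (u h) * u h)"
proof -
  have "conjugate v \<bullet> (real_mat d P *\<^sub>v v) = (\<Sum>i<d. \<Sum>j<d. cnj (v $ i) * complex_of_real (P i j) * v $ j)"
    unfolding conjugate_scalar_prod_real_mat[OF v] by (simp add: sum_distrib_left mult.assoc)
  also have "\<dots> = (\<Sum>i<d. \<Sum>j<d. \<Sum>h<d. cnj (v $ i) * complex_of_real (P h i) * (complex_of_real (P h j) * v $ j))"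
  proof (intro sum.cong refl)
    fix i j assume "i \<in> {..<d}" "j \<in> {..<d}"
    then have "complex_of_real (P i j) = (\<Sum>h<d. complex_of_real (P h i) * complex_of_real (P h j))"
      by (simp add: real_projection_eq_transpose_mult[OF P, of i j])
    then show "cnj (v $ i) * complex_of_real (P i j) * v $ j
        = (\<Sum>h<d. cnj (v $ i) * complex_of_real (P h i) * (complex_of_real (P h j) * v $ j))"
      by (simp add: sum_distrib_left sum_distrib_right mult_ac)
  qed
  also have "\<dots> = (\<Sum>i<d. \<Sum>h<d. \<Sum>j<d. cnj (v $ i) * complex_of_real (P h i) * (complex_of_real (P h j) * v $ j))"
    by (rule sum.cong[OF refl], rule sum.swap)
  also have "\<dots> = (\<Sum>h<d. \<Sum>i<d. \<Sum>j<d. cnj (v $ i) * complex_of_real (P h i) * (complex_of_real (P h j) * v $ j))"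
    by (rule sum.swap)
  also have "\<dots> = (\<Sum>h<d. cnj (u h) * u h)"
  proof (rule sum.cong[OF refl])
    fix h
    have "cnj (u h) = (\<Sum>i<d. cnj (v $ i) * complex_of_real (P h i))"
      by (simp add: u_def mult.commute)
    then show "(\<Sum>i<d. \<Sum>j<d. cnj (v $ i) * complex_of_real (P h i) * (complex_of_real (P h j) * v $ j))
        = cnj (u h) * u h"
      unfolding u_def by (simp only: sum_product)
  qed
  finally show ?thesis .
qed

lemma psd_mat_real_projection:
  assumes "real_projection d P"
  shows "psd_mat d (real_mat d P)"
proof -
  have cnj_mult_self: "0 \<le> Re (cnj z * z)" for z :: complex
    by (simp add: mult.commute[of "cnj z"] complex_mult_cnj)
  have "Re (conjugate v \<bullet> (real_mat d P *\<^sub>v v)) \<ge> 0" if v: "v \<in> carrier_vec d" for v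
    unfolding conjugate_scalar_prod_real_projection[OF assms v] Re_sum
    by (intro sum_nonneg cnj_mult_self)
  moreover have "hermitian_mat d (real_mat d P)"
    using real_projection_sym[OF assms] by (simp add: hermitian_mat_def)
  ultimately show ?thesis
    by (simp add: psd_mat_def)
qed

lemma real_projection_complement:
  assumes "real_projection d P"
  shows "real_projection d (\<lambda>i j. of_bool (i = j) - P i j)"
  unfolding real_projection_def
proof (intro allI impI conjI)
  fix i j assume ij: "i < d" "j < d"
  have P: "P i j = P j i" "(\<Sum>h<d. P i h * P h j) = P i j"
    using assms ij unfolding real_projection_def by blast+
  then show "of_bool (i = j) - P i j = of_bool (j = i) - P j i" by auto
  have "(\<Sum>h<d. (of_bool (i = h) - P i h) * (of_bool (h = j) - P h j))
      = (\<Sum>h<d. of_bool (i = h) * of_bool (h = j)) - (\<Sum>h<d. of_bool (i = h) * P h j)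
        - (\<Sum>h<d. P i h * of_bool (h = j)) + (\<Sum>h<d. P i h * P h j)"
    by (simp add: algebra_simps sum.distrib sum_subtractf)
  also have "\<dots> = of_bool (i = j) - P i j"
    using ij P by (simp add: of_bool_def if_distrib[of "\<lambda>x. x * _"] if_distrib[of "\<lambda>x. _ * x"] cong: if_cong)
  finally show "(\<Sum>h<d. (of_bool (i = h) - P i h) * (of_bool (h = j) - P h j)) = of_bool (i = j) - P i j" .
qed

lemma povm_elem_real_projection:
  assumes "real_projection d P"
  shows "povm_elem d (real_mat d P)"
proof -
  have "1\<^sub>m d - real_mat d P = real_mat d (\<lambda>i j. of_bool (i = j) - P i j)"
    by (rule eq_matI) auto
  then show ?thesis
    using assms by (simp add: povm_elem_def psd_mat_real_projection real_projection_complement)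
qed

lemma density_op_real_pure:
  assumes "unit_vector d \<psi>"
  shows "density_op d (real_mat d (\<lambda>i j. \<psi> i * \<psi> j))"
proof -
  have "(\<Sum>h<d. \<psi> i * \<psi> h * (\<psi> h * \<psi> j)) = \<psi> i * \<psi> j * (\<Sum>h<d. (\<psi> h)\<^sup>2)" for i j
    by (simp add: sum_distrib_left power2_eq_square mult_ac)
  then have "real_projection d (\<lambda>i j. \<psi> i * \<psi> j)"
    using assms by (simp add: real_projection_def unit_vector_def)
  moreover have "mtrace (real_mat d (\<lambda>i j. \<psi> i * \<psi> j)) = 1"
  proof -
    have "(\<Sum>i<d. \<psi> i * \<psi> i) = 1"
      using assms by (simp add: unit_vector_def power2_eq_square)
    then show ?thesis
      by (simp add: mtrace_def flip: of_real_sum of_real_mult)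
  qed
  ultimately show ?thesis by (simp add: density_op_def psd_mat_real_projection)
qed

lemma kron_real_mat:
  assumes "d' > 0"
  shows "kron (real_mat d P) (real_mat d' P')
    = real_mat (d * d') (\<lambda>i j. P (i div d') (j div d') * P' (i mod d') (j mod d'))"
proof (rule eq_matI)
  fix i j assume "i < dim_row (real_mat (d * d') (\<lambda>i j. P (i div d') (j div d') * P' (i mod d') (j mod d')))"
    "j < dim_col (real_mat (d * d') (\<lambda>i j. P (i div d') (j div d') * P' (i mod d') (j mod d')))"
  then have "i < d * d'" "j < d * d'" by auto
  moreover from this have "i div d' < d" "j div d' < d" "i mod d' < d'" "j mod d' < d'"
    using assms by (auto simp: less_mult_imp_div_less mult.commute)
  ultimately show "kron (real_mat d P) (real_mat d' P') $$ (i, j)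
      = real_mat (d * d') (\<lambda>i j. P (i div d') (j div d') * P' (i mod d') (j mod d')) $$ (i, j)"
    by (simp add: kron_def)
qed (auto simp: kron_def)

lemma mtrace_real_mat_mult:
  "mtrace (real_mat d P * real_mat d P') = complex_of_real (\<Sum>i<d. \<Sum>j<d. P i j * P' j i)"
  by (simp add: mtrace_def scalar_prod_def atLeast0LessThan)

definition bounded_error ::
  "nat \<Rightarrow> (bool list \<Rightarrow> bool list \<Rightarrow> bool) \<Rightarrow> (bool list \<Rightarrow> bool list \<Rightarrow> real) \<Rightarrow> bool" where
  "bounded_error n f p \<longleftrightarrow>
     (\<forall>x y. length x = n \<longrightarrow> length y = n \<longrightarrow> (if f x y then 2/3 \<le> p x y else p x y \<le> 1/3))"

lemma bounded_errorD:
  "bounded_error n f p \<Longrightarrow> length x = n \<Longrightarrow> length y = n \<Longrightarrow> (if f x y then 2/3 \<le> p x y else p x y \<le> 1/3)"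
  unfolding bounded_error_def by blast

lemma bounded_error_cong:
  assumes "bounded_error n f p" "\<And>x y. length x = n \<Longrightarrow> length y = n \<Longrightarrow> p x y = q x y"
  shows "bounded_error n f q"
  unfolding bounded_error_def
proof (intro allI impI)
  fix x y :: "bool list" assume xy: "length x = n" "length y = n"
  show "if f x y then 2/3 \<le> q x y else q x y \<le> 1/3"
    unfolding assms(2)[OF xy, symmetric] by (rule bounded_errorD[OF assms(1) xy])
qed

lemma Q_smp_le_real_protocol:
  assumes "\<And>x. length x = n \<Longrightarrow> unit_vector (2^qa) (\<psi> x)"
    and "\<And>y. length y = n \<Longrightarrow> unit_vector (2^qb) (\<phi> y)"
    and "real_projection (2^(qa+qb)) P"
    and "bounded_error n f (\<lambda>x y. quadratic_form (2^(qa+qb)) P (tensor_vec (2^qb) (\<psi> x) (\<phi> y)))"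
  shows "Q_smp n f \<le> qa + qb"
proof -
  define \<rho> where "\<rho> x = real_mat (2^qa) (\<lambda>i j. \<psi> x i * \<psi> x j)" for x
  define \<sigma> where "\<sigma> y = real_mat (2^qb) (\<lambda>i j. \<phi> y i * \<phi> y j)" for y
  have "quantum_smp_protocol n f qa qb \<rho> \<sigma> (real_mat (2^(qa+qb)) P)"
    unfolding quantum_smp_protocol_def Let_def
  proof (intro conjI allI impI)
    fix x y :: "bool list" assume xy: "length x = n" "length y = n"
    have "Re (mtrace (real_mat (2^(qa+qb)) P * kron (\<rho> x) (\<sigma> y)))
        = quadratic_form (2^(qa+qb)) P (tensor_vec (2^qb) (\<psi> x) (\<phi> y))"
      unfolding \<rho>_def \<sigma>_def
      by (simp add: kron_real_mat power_add mtrace_real_mat_mult quadratic_form_def tensor_vec_def mult_ac)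
    then show "2/3 \<le> (if f x y then Re (mtrace (real_mat (2^(qa+qb)) P * kron (\<rho> x) (\<sigma> y)))
        else 1 - Re (mtrace (real_mat (2^(qa+qb)) P * kron (\<rho> x) (\<sigma> y))))"
      using bounded_errorD[OF assms(4) xy] by auto
  qed (use assms in \<open>simp_all add: \<rho>_def \<sigma>_def density_op_real_pure povm_elem_real_projection\<close>)
  then show ?thesis
    unfolding Q_smp_def by (intro Least_le) blast
qed

lemma unit_vector_indicator: "j < d \<Longrightarrow> unit_vector d (\<lambda>i. of_bool (i = j))"
  by (simp add: unit_vector_def power2_eq_square)

lemma sum_indicator_mult: "e < d \<Longrightarrow> (\<Sum>j<d. of_bool (j = e) * v j) = (v e :: real)"
  for d e :: nat
  unfolding of_bool_def by (simp add: if_distrib[of "\<lambda>x. x * _"] cong: if_cong)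

lemma quadratic_form_indicator: "j < d \<Longrightarrow> quadratic_form d P (\<lambda>i. of_bool (i = j)) = P j j"
  unfolding quadratic_form_def of_bool_def
  by (simp add: if_distrib[of "\<lambda>x. x * _"] if_distrib[of "\<lambda>x. _ * x"] cong: if_cong)

lemma real_projection_diagonal: "real_projection d (\<lambda>i j. of_bool (i = j \<and> S i))"
proof -
  have "(of_bool (i = h \<and> S i) * of_bool (h = j \<and> S h) :: real)
      = (if h = i then of_bool (i = j \<and> S i) else 0)" for i j h
    by auto
  then show ?thesis
    by (auto simp: real_projection_def)
qed

lemma tensor_vec_indicator:
  assumes "b < d"
  shows "tensor_vec d (\<lambda>i. of_bool (i = a)) (\<lambda>i. of_bool (i = b)) = (\<lambda>i. of_bool (i = a * d + b))"
proof -
  have "(i div d = a \<and> i mod d = b) \<longleftrightarrow> i = a * d + b" for i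
  proof
    show "i div d = a \<and> i mod d = b \<Longrightarrow> i = a * d + b"
      by (metis div_mult_mod_eq)
    show "i = a * d + b \<Longrightarrow> i div d = a \<and> i mod d = b"
      using assms by simp
  qed
  then show ?thesis
    by (simp add: tensor_vec_def fun_eq_iff flip: of_bool_conj)
qed

lemma map_bit_horner_sum: "map (bit (horner_sum of_bool 2 xs :: nat)) [0..<length xs] = xs"
  by (rule nth_equalityI) (simp_all add: bit_horner_sum_bit_iff)

text \<open>Each player sends the basis state with index horner_sum of_bool 2 x of its input x.\<close>
lemma Q_smp_le_trivial: "Q_smp n f \<le> n + n"
proof -
  let ?enc = "\<lambda>x. horner_sum of_bool 2 x :: nat" and ?dec = "\<lambda>i :: nat. map (bit i) [0..<n]"
  define \<psi> where "\<psi> x = (\<lambda>i. of_bool (i = ?enc x) :: real)" for x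
  define P where "P i j = (of_bool (i = j \<and> f (?dec (i div 2^n)) (?dec (i mod 2^n))) :: real)" for i j
  have enc_less: "?enc x < 2^n" if "length x = n" for x
    using horner_sum_bound[of x] that by simp
  have accept: "quadratic_form (2^(n+n)) P (tensor_vec (2^n) (\<psi> x) (\<psi> y)) = of_bool (f x y)"
    if xy: "length x = n" "length y = n" for x y
  proof -
    have "(?enc x * 2^n + ?enc y) div 2^n < 2^n"
      using enc_less[OF xy(1)] enc_less[OF xy(2)] by simp
    then have "?enc x * 2^n + ?enc y < 2^(n+n)"
      by (simp only: div_less_iff_less_mult zero_less_power pos2 power_add)
    then show ?thesis
      unfolding \<psi>_def P_def using xy enc_less[OF xy(2)] map_bit_horner_sum[of x] map_bit_horner_sum[of y]
      by (simp add: tensor_vec_indicator quadratic_form_indicator)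
  qed
  have unit: "unit_vector (2^n) (\<psi> x)" if "length x = n" for x
    unfolding \<psi>_def using enc_less[OF that] by (rule unit_vector_indicator)
  have proj: "real_projection (2^(n+n)) P"
    unfolding P_def by (rule real_projection_diagonal)
  have bounded: "bounded_error n f (\<lambda>x y. quadratic_form (2^(n+n)) P (tensor_vec (2^n) (\<psi> x) (\<psi> y)))"
    by (simp add: bounded_error_def accept)
  show ?thesis
    by (rule Q_smp_le_real_protocol[where qa=n and qb=n, OF unit unit proj bounded])
qed

section \<open>Digit expansions and tensor powers\<close>

definition digit :: "nat \<Rightarrow> nat \<Rightarrow> nat \<Rightarrow> nat" where
  "digit D l i = i div D ^ l mod D"

lemma digit_0 [simp]: "digit D 0 i = i mod D"
  by (simp add: digit_def)

lemma digit_Suc: "digit D (Suc l) i = digit D l (i div D)"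
  by (simp add: digit_def div_mult2_eq mult.commute)

lemma digit_less: "0 < D \<Longrightarrow> digit D l i < D"
  by (simp add: digit_def)

lemma sum_lessThan_mult:
  fixes G :: "nat \<Rightarrow> 'a::comm_monoid_add"
  shows "(\<Sum>i<p * q. G i) = (\<Sum>u<p. \<Sum>w<q. G (u * q + w))"
proof (induction p)
  case (Suc p)
  have "(\<Sum>i<Suc p * q. G i) = (\<Sum>i<p * q. G i) + (\<Sum>i\<in>{p * q..<p * q + q}. G i)"
    by (simp add: lessThan_atLeast0 sum.atLeastLessThan_concat add.commute)
  also have "(\<Sum>i\<in>{p * q..<p * q + q}. G i) = (\<Sum>w<q. G (p * q + w))"
    by (simp add: sum.shift_bounds_nat_ivl[where k="p * q" and m=0, simplified] lessThan_atLeast0 add.commute)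
  finally show ?case
    using Suc by simp
qed simp

lemma sum_lessThan_mult_div_mod:
  fixes G :: "nat \<Rightarrow> nat \<Rightarrow> 'a::comm_monoid_add"
  shows "(\<Sum>i<p * q. G (i div q) (i mod q)) = (\<Sum>u<p. \<Sum>w<q. G u w)"
  unfolding sum_lessThan_mult by (intro sum.cong refl) auto

lemma sum_digits_prod:
  fixes F :: "nat \<Rightarrow> nat \<Rightarrow> 'a::comm_semiring_1"
  shows "(\<Sum>i<D^k. \<Prod>l<k. F l (digit D l i)) = (\<Prod>l<k. \<Sum>a<D. F l a)"
proof (induction k arbitrary: F)
  case (Suc k)
  have "(\<Sum>i<D^Suc k. \<Prod>l<Suc k. F l (digit D l i))
      = (\<Sum>i<D^k * D. F 0 (i mod D) * (\<Prod>l<k. F (Suc l) (digit D l (i div D))))"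
    by (simp only: prod.lessThan_Suc_shift digit_0 digit_Suc power_Suc2)
  also have "\<dots> = (\<Sum>u<D^k. \<Sum>a<D. F 0 a * (\<Prod>l<k. F (Suc l) (digit D l u)))"
    by (rule sum_lessThan_mult_div_mod)
  also have "\<dots> = (\<Sum>a<D. F 0 a) * (\<Sum>u<D^k. \<Prod>l<k. F (Suc l) (digit D l u))"
    by (simp add: sum_distrib_left sum_distrib_right)
  also have "\<dots> = (\<Prod>l<Suc k. \<Sum>a<D. F l a)"
    using Suc[of "\<lambda>l. F (Suc l)"] by (simp only: prod.lessThan_Suc_shift)
  finally show ?case .
qed simp

lemma sum_pair_digits_prod:
  fixes F :: "nat \<Rightarrow> nat \<Rightarrow> nat \<Rightarrow> 'a::comm_semiring_1"
  shows "(\<Sum>i<D^k * D^k. \<Prod>l<k. F l (digit D l (i div D^k)) (digit D l (i mod D^k)))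
    = (\<Prod>l<k. \<Sum>a<D. \<Sum>b<D. F l a b)"
proof -
  have "(\<Sum>i<D^k * D^k. \<Prod>l<k. F l (digit D l (i div D^k)) (digit D l (i mod D^k)))
      = (\<Sum>u<D^k. \<Sum>w<D^k. \<Prod>l<k. F l (digit D l u) (digit D l w))"
    by (rule sum_lessThan_mult_div_mod)
  also have "\<dots> = (\<Sum>u<D^k. \<Prod>l<k. \<Sum>b<D. F l (digit D l u) b)"
    by (intro sum.cong refl sum_digits_prod[where F="\<lambda>l b. F l (digit D l _) b"])
  also have "\<dots> = (\<Prod>l<k. \<Sum>a<D. \<Sum>b<D. F l a b)"
    by (rule sum_digits_prod[where F="\<lambda>l a. \<Sum>b<D. F l a b"])
  finally show ?thesis .
qed

definition tensor_power :: "nat \<Rightarrow> nat \<Rightarrow> (nat \<Rightarrow> real) \<Rightarrow> nat \<Rightarrow> real" where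
  "tensor_power D k \<psi> i = (\<Prod>l<k. \<psi> (digit D l i))"

lemma unit_vector_tensor_power:
  "unit_vector D \<psi> \<Longrightarrow> unit_vector (D^k) (tensor_power D k \<psi>)"
  unfolding unit_vector_def tensor_power_def prod_power_distrib
  by (simp add: sum_digits_prod[where F="\<lambda>l a. (\<psi> a)\<^sup>2"])

text \<open>An operator on k pairs of D-dimensional registers, acting as Q l on the l-th pair.
  An index i < D^k * D^k holds the k registers of one party in i div D^k and those of the
  other party in i mod D^k, one per base-D digit.\<close>
definition copywise_op ::
  "nat \<Rightarrow> nat \<Rightarrow> (nat \<Rightarrow> nat \<Rightarrow> nat \<Rightarrow> nat \<Rightarrow> nat \<Rightarrow> real) \<Rightarrow> nat \<Rightarrow> nat \<Rightarrow> real" where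
  "copywise_op D k Q i j = (\<Prod>l<k. Q l (digit D l (i div D^k)) (digit D l (i mod D^k))
     (digit D l (j div D^k)) (digit D l (j mod D^k)))"

lemma copywise_op_mult:
  "(\<Sum>h<D^k * D^k. copywise_op D k Q i h * copywise_op D k Q' h j)
    = copywise_op D k (\<lambda>l a b a' b'. \<Sum>c<D. \<Sum>d<D. Q l a b c d * Q' l c d a' b') i j"
  unfolding copywise_op_def
  by (simp add: sum_pair_digits_prod[where F="\<lambda>l c d. Q l (digit D l (i div D^k)) (digit D l (i mod D^k)) c d
      * Q' l c d (digit D l (j div D^k)) (digit D l (j mod D^k))", symmetric] prod.distrib)

lemma quadratic_form_copywise_op:
  "quadratic_form (D^k * D^k) (copywise_op D k Q) (tensor_vec (D^k) (tensor_power D k \<psi>) (tensor_power D k \<phi>))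
    = (\<Prod>l<k. \<Sum>a<D. \<Sum>b<D. \<Sum>a'<D. \<Sum>b'<D. \<psi> a * \<phi> b * Q l a b a' b' * (\<psi> a' * \<phi> b'))"
proof -
  let ?v = "tensor_vec (D^k) (tensor_power D k \<psi>) (tensor_power D k \<phi>)"
  let ?a = "\<lambda>l i. digit D l (i div D^k)" and ?b = "\<lambda>l i. digit D l (i mod D^k)"
  have "?v i * copywise_op D k Q i j * ?v j
      = (\<Prod>l<k. \<psi> (?a l i) * \<phi> (?b l i) * Q l (?a l i) (?b l i) (?a l j) (?b l j) * (\<psi> (?a l j) * \<phi> (?b l j)))"
    for i j
    by (simp add: tensor_vec_def tensor_power_def copywise_op_def prod.distrib)
  then have "quadratic_form (D^k * D^k) (copywise_op D k Q) ?v
      = (\<Sum>i<D^k * D^k. \<Sum>j<D^k * D^k. \<Prod>l<k.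
           \<psi> (?a l i) * \<phi> (?b l i) * Q l (?a l i) (?b l i) (?a l j) (?b l j) * (\<psi> (?a l j) * \<phi> (?b l j)))"
    by (simp add: quadratic_form_def)
  also have "\<dots> = (\<Sum>i<D^k * D^k. \<Prod>l<k. \<Sum>a'<D. \<Sum>b'<D.
           \<psi> (?a l i) * \<phi> (?b l i) * Q l (?a l i) (?b l i) a' b' * (\<psi> a' * \<phi> b'))"
    by (intro sum.cong refl sum_pair_digits_prod[where
          F="\<lambda>l a' b'. \<psi> (?a l _) * \<phi> (?b l _) * Q l (?a l _) (?b l _) a' b' * (\<psi> a' * \<phi> b')"])
  also have "\<dots> = (\<Prod>l<k. \<Sum>a<D. \<Sum>b<D. \<Sum>a'<D. \<Sum>b'<D. \<psi> a * \<phi> b * Q l a b a' b' * (\<psi> a' * \<phi> b'))"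
    by (rule sum_pair_digits_prod)
  finally show ?thesis .
qed

section \<open>The swap test\<close>

text \<open>The projections (I + SWAP)/2 (for s) and (I - SWAP)/2 (for \<not> s) on pairs of
  D-dimensional registers: the two outcomes of the swap test.\<close>
definition swap_proj :: "bool \<Rightarrow> nat \<Rightarrow> nat \<Rightarrow> nat \<Rightarrow> nat \<Rightarrow> real" where
  "swap_proj s a b a' b' = (of_bool (a = a' \<and> b = b') + (if s then 1 else -1) * of_bool (a = b' \<and> b = a')) / 2"

lemma swap_proj_sym: "swap_proj s a b a' b' = swap_proj s a' b' a b"
proof -
  have "(a = a' \<and> b = b') = (a' = a \<and> b' = b)" "(a = b' \<and> b = a') = (a' = b \<and> b' = a)"
    by auto
  then show ?thesis
    unfolding swap_proj_def by (simp only:)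
qed

lemma swap_proj_swap: "swap_proj s b a a' b' = (if s then 1 else -1) * swap_proj s a b a' b'"
proof -
  have "(b = a' \<and> a = b') = (a = b' \<and> b = a')" "(b = b' \<and> a = a') = (a = a' \<and> b = b')"
    by auto
  then show ?thesis
    by (cases s) (simp_all add: swap_proj_def algebra_simps)
qed

lemma sum_delta_pair:
  fixes X :: "nat \<Rightarrow> nat \<Rightarrow> real"
  assumes "a < D" "b < D"
  shows "(\<Sum>c<D. \<Sum>d<D. of_bool (a = c \<and> b = d) * X c d) = X a b"
proof -
  have "(\<Sum>c<D. \<Sum>d<D. of_bool (a = c \<and> b = d) * X c d) = (\<Sum>c<D. of_bool (a = c) * X c b)"
    using assms(2) by (intro sum.cong refl) (simp add: of_bool_conj mult.assoc)
  also have "\<dots> = X a b"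
    using assms(1) by simp
  finally show ?thesis .
qed

lemma sum_swap_proj_mult:
  fixes X :: "nat \<Rightarrow> nat \<Rightarrow> real"
  assumes "a < D" "b < D"
  shows "(\<Sum>c<D. \<Sum>d<D. swap_proj s a b c d * X c d) = (X a b + (if s then 1 else -1) * X b a) / 2"
proof -
  define \<sigma> :: real where "\<sigma> = (if s then 1 else -1)"
  have "swap_proj s a b c d * X c d = (of_bool (a = c \<and> b = d) * X c d + \<sigma> * (of_bool (b = c \<and> a = d) * X c d)) / 2"
    for c d
    by (auto simp: swap_proj_def \<sigma>_def algebra_simps)
  then have "(\<Sum>c<D. \<Sum>d<D. swap_proj s a b c d * X c d)
      = ((\<Sum>c<D. \<Sum>d<D. of_bool (a = c \<and> b = d) * X c d) + \<sigma> * (\<Sum>c<D. \<Sum>d<D. of_bool (b = c \<and> a = d) * X c d)) / 2"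
    by (simp only: sum_divide_distrib[symmetric] sum.distrib sum_distrib_left[symmetric])
  also have "\<dots> = (X a b + \<sigma> * X b a) / 2"
    using assms by (simp only: sum_delta_pair)
  finally show ?thesis
    unfolding \<sigma>_def .
qed

lemma swap_proj_mult:
  assumes "a < D" "b < D"
  shows "(\<Sum>c<D. \<Sum>d<D. swap_proj s a b c d * swap_proj s' c d a' b')
    = (if s = s' then swap_proj s a b a' b' else 0)"
proof -
  have "(\<Sum>c<D. \<Sum>d<D. swap_proj s a b c d * swap_proj s' c d a' b')
      = (swap_proj s' a b a' b' + (if s then 1 else -1) * swap_proj s' b a a' b') / 2"
    using assms by (rule sum_swap_proj_mult)
  also have "\<dots> = (1 + (if s then 1 else -1) * (if s' then 1 else -1)) / 2 * swap_proj s' a b a' b'"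
    unfolding swap_proj_swap[of s' b a] by (simp add: algebra_simps)
  finally show ?thesis
    by (cases s; cases s') simp_all
qed

lemma swap_test:
  fixes \<psi> \<phi> :: "nat \<Rightarrow> real"
  shows "(\<Sum>a<D. \<Sum>b<D. \<Sum>a'<D. \<Sum>b'<D. \<psi> a * \<phi> b * swap_proj s a b a' b' * (\<psi> a' * \<phi> b'))
    = ((\<Sum>a<D. (\<psi> a)\<^sup>2) * (\<Sum>b<D. (\<phi> b)\<^sup>2) + (if s then 1 else -1) * (\<Sum>a<D. \<psi> a * \<phi> a)\<^sup>2) / 2"
proof -
  define \<sigma> :: real where "\<sigma> = (if s then 1 else -1)"
  have "(\<Sum>a<D. \<Sum>b<D. \<Sum>a'<D. \<Sum>b'<D. \<psi> a * \<phi> b * swap_proj s a b a' b' * (\<psi> a' * \<phi> b'))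
      = (\<Sum>a<D. \<Sum>b<D. \<psi> a * \<phi> b * ((\<psi> a * \<phi> b + \<sigma> * (\<psi> b * \<phi> a)) / 2))"
    unfolding \<sigma>_def
    by (intro sum.cong refl)
      (simp add: sum_swap_proj_mult[where X="\<lambda>a' b'. \<psi> a' * \<phi> b'", symmetric] sum_distrib_left mult.assoc)
  also have "\<dots> = (\<Sum>a<D. \<Sum>b<D. ((\<psi> a)\<^sup>2 * (\<phi> b)\<^sup>2 + \<sigma> * ((\<psi> a * \<phi> a) * (\<psi> b * \<phi> b))) / 2)"
    by (simp add: power2_eq_square algebra_simps)
  also have "\<dots> = ((\<Sum>a<D. (\<psi> a)\<^sup>2) * (\<Sum>b<D. (\<phi> b)\<^sup>2) + \<sigma> * (\<Sum>a<D. \<psi> a * \<phi> a)\<^sup>2) / 2"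
    by (simp only: sum_divide_distrib[symmetric] sum.distrib sum_distrib_left[symmetric] sum_product
        power2_eq_square[of "\<Sum>a<D. \<psi> a * \<phi> a"])
  finally show ?thesis
    unfolding \<sigma>_def .
qed

definition bool_patterns :: "nat \<Rightarrow> (nat \<Rightarrow> bool) set" where
  "bool_patterns k = PiE_dflt {..<k} False (\<lambda>_. UNIV)"

lemma finite_bool_patterns: "finite (bool_patterns k)"
  by (auto simp: bool_patterns_def)

lemma bool_patterns_eq:
  assumes "v \<in> bool_patterns k" "v' \<in> bool_patterns k" "\<And>l. l < k \<Longrightarrow> v l = v' l"
  shows "v = v'"
  using assms by (auto simp: bool_patterns_def PiE_dflt_def fun_eq_iff)

lemma copywise_swap_proj_mult:
  assumes "0 < D" "v \<in> bool_patterns k" "v' \<in> bool_patterns k"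
  shows "(\<Sum>h<D^k * D^k. copywise_op D k (\<lambda>l. swap_proj (v l)) i h * copywise_op D k (\<lambda>l. swap_proj (v' l)) h j)
    = (if v = v' then copywise_op D k (\<lambda>l. swap_proj (v l)) i j else 0)"
proof (cases "v = v'")
  case True
  then show ?thesis
    unfolding copywise_op_mult unfolding copywise_op_def using assms(1) by (simp add: swap_proj_mult digit_less)
next
  case False
  then obtain l where "l < k" "v l \<noteq> v' l"
    using bool_patterns_eq[OF assms(2,3)] by blast
  then show ?thesis
    unfolding copywise_op_mult unfolding copywise_op_def using assms(1)
    by (auto simp: swap_proj_mult digit_less intro!: prod_zero)
qed

text \<open>Swap-test each of the k register pairs and accept iff at least t tests
  report the symmetric outcome.\<close>
definition threshold_op :: "nat \<Rightarrow> nat \<Rightarrow> real \<Rightarrow> nat \<Rightarrow> nat \<Rightarrow> real" where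
  "threshold_op D k t i j = (\<Sum>v\<in>bool_patterns k.
     of_bool (t \<le> card {l\<in>{..<k}. v l}) * copywise_op D k (\<lambda>l. swap_proj (v l)) i j)"

lemma real_projection_threshold_op:
  assumes "0 < D"
  shows "real_projection (D^k * D^k) (threshold_op D k t)"
  unfolding real_projection_def
proof (intro allI impI conjI)
  fix i j
  show "threshold_op D k t i j = threshold_op D k t j i"
    unfolding threshold_op_def copywise_op_def by (subst swap_proj_sym) (rule refl)
  let ?c = "\<lambda>v. of_bool (t \<le> card {l\<in>{..<k}. v l}) :: real"
  let ?P = "\<lambda>v. copywise_op D k (\<lambda>l. swap_proj (v l))"
  have "(\<Sum>h<D^k * D^k. threshold_op D k t i h * threshold_op D k t h j)
      = (\<Sum>h<D^k * D^k. \<Sum>v\<in>bool_patterns k. \<Sum>v'\<in>bool_patterns k. ?c v * ?P v i h * (?c v' * ?P v' h j))"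
    unfolding threshold_op_def by (rule sum.cong[OF refl], rule sum_product)
  also have "\<dots> = (\<Sum>v\<in>bool_patterns k. \<Sum>h<D^k * D^k. \<Sum>v'\<in>bool_patterns k. ?c v * ?P v i h * (?c v' * ?P v' h j))"
    by (rule sum.swap)
  also have "\<dots> = (\<Sum>v\<in>bool_patterns k. \<Sum>v'\<in>bool_patterns k. \<Sum>h<D^k * D^k. ?c v * ?P v i h * (?c v' * ?P v' h j))"
    by (intro sum.cong refl sum.swap)
  also have "\<dots> = (\<Sum>v\<in>bool_patterns k. \<Sum>v'\<in>bool_patterns k. ?c v * ?c v' * (\<Sum>h<D^k * D^k. ?P v i h * ?P v' h j))"
    by (simp add: sum_distrib_left mult_ac)
  also have "\<dots> = (\<Sum>v\<in>bool_patterns k. \<Sum>v'\<in>bool_patterns k. if v' = v then ?c v * ?P v i j else 0)"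
    using assms by (intro sum.cong refl) (auto simp: copywise_swap_proj_mult)
  also have "\<dots> = (\<Sum>v\<in>bool_patterns k. ?c v * ?P v i j)"
    by (simp add: finite_bool_patterns)
  finally show "(\<Sum>h<D^k * D^k. threshold_op D k t i h * threshold_op D k t h j) = threshold_op D k t i j"
    unfolding threshold_op_def .
qed

lemma quadratic_form_sum:
  "quadratic_form d (\<lambda>i j. \<Sum>v\<in>V. c v * P v i j) x = (\<Sum>v\<in>V. c v * quadratic_form d (P v) x)"
  by (simp add: quadratic_form_def sum_distrib_left sum_distrib_right sum.swap[of _ V] mult_ac)

lemma swap_test_unit:
  assumes "unit_vector D \<psi>" "unit_vector D \<phi>"
  shows "(\<Sum>a<D. \<Sum>b<D. \<Sum>a'<D. \<Sum>b'<D. \<psi> a * \<phi> b * swap_proj s a b a' b' * (\<psi> a' * \<phi> b'))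
    = pmf (bernoulli_pmf ((1 + (\<Sum>a<D. \<psi> a * \<phi> a)\<^sup>2) / 2)) s"
proof -
  have "(\<Sum>a<D. \<psi> a * \<phi> a)\<^sup>2 \<le> 1"
    using Cauchy_Schwarz_ineq_sum[of \<psi> \<phi> "{..<D}"] assms by (simp add: unit_vector_def)
  then show ?thesis
    using assms unfolding swap_test unit_vector_def by (cases s) (simp_all add: field_simps)
qed

lemma quadratic_form_threshold_op:
  assumes "0 < D" "unit_vector D \<psi>" "unit_vector D \<phi>"
  shows "quadratic_form (D^k * D^k) (threshold_op D k t) (tensor_vec (D^k) (tensor_power D k \<psi>) (tensor_power D k \<phi>))
    = measure_pmf.prob (binomial_pmf k ((1 + (\<Sum>a<D. \<psi> a * \<phi> a)\<^sup>2) / 2)) {j. t \<le> real j}"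
proof -
  define p where "p = (1 + (\<Sum>a<D. \<psi> a * \<phi> a)\<^sup>2) / 2"
  have p: "p \<in> {0..1}"
    using Cauchy_Schwarz_ineq_sum[of \<psi> \<phi> "{..<D}"] assms(2,3) by (simp add: p_def unit_vector_def)
  define B where "B = Pi_pmf {..<k} False (\<lambda>_. bernoulli_pmf p)"
  let ?C = "{v. t \<le> card {l\<in>{..<k}. v l}}"
  have pmf_B: "(\<Prod>l<k. pmf (bernoulli_pmf p) (v l)) = pmf B v" if "v \<in> bool_patterns k" for v
    unfolding B_def using that by (subst pmf_Pi') (auto simp: bool_patterns_def PiE_dflt_def)
  have "quadratic_form (D^k * D^k) (threshold_op D k t) (tensor_vec (D^k) (tensor_power D k \<psi>) (tensor_power D k \<phi>))
      = (\<Sum>v\<in>bool_patterns k. of_bool (v \<in> ?C) * pmf B v)"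
    unfolding threshold_op_def quadratic_form_sum quadratic_form_copywise_op
      swap_test_unit[OF assms(2,3)] p_def[symmetric]
    by (intro sum.cong refl) (simp add: pmf_B)
  also have "\<dots> = measure_pmf.prob B (bool_patterns k \<inter> ?C)"
    by (simp add: measure_measure_pmf_finite finite_bool_patterns Int_def)
  also have "\<dots> = measure_pmf.prob B ?C"
    unfolding B_def
    by (rule measure_prob_cong_0) (auto intro!: pmf_Pi_outside simp: bool_patterns_def PiE_dflt_def)
  also have "\<dots> = measure_pmf.prob (binomial_pmf k p) {j. t \<le> real j}"
    unfolding B_def binomial_pmf_altdef'[of "{..<k}" k p False, OF finite_lessThan card_lessThan p]
    by (simp add: vimage_def)
  finally show ?thesis
    unfolding p_def .
qed

text \<open>Each player sends k copies of an e-qubit state; the referee runs the threshold swap test.\<close>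
lemma Q_smp_le_swap_test_protocol:
  assumes unit_\<psi>: "\<And>x. length x = n \<Longrightarrow> unit_vector (2^e) (\<psi> x)"
    and unit_\<phi>: "\<And>y. length y = n \<Longrightarrow> unit_vector (2^e) (\<phi> y)"
    and err: "bounded_error n f
      (\<lambda>x y. measure_pmf.prob (binomial_pmf k ((1 + (\<Sum>a<2^e. \<psi> x a * \<phi> y a)\<^sup>2) / 2)) {j. t \<le> real j})"
  shows "Q_smp n f \<le> e * k + e * k"
proof -
  define D :: nat where "D = 2^e"
  have D: "0 < D" "(2::nat)^(e * k) = D^k" "(2::nat)^(e * k + e * k) = D^k * D^k"
    by (simp_all add: D_def power_mult power_add)
  have \<psi>: "unit_vector D (\<psi> x)" if "length x = n" for x
    using unit_\<psi>[OF that] by (simp add: D_def)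
  have \<phi>: "unit_vector D (\<phi> y)" if "length y = n" for y
    using unit_\<phi>[OF that] by (simp add: D_def)
  have "unit_vector (2^(e * k)) (tensor_power D k (\<psi> x))" if "length x = n" for x
    unfolding D(2) using \<psi>[OF that] by (rule unit_vector_tensor_power)
  moreover have "unit_vector (2^(e * k)) (tensor_power D k (\<phi> y))" if "length y = n" for y
    unfolding D(2) using \<phi>[OF that] by (rule unit_vector_tensor_power)
  moreover have "real_projection (2^(e * k + e * k)) (threshold_op D k t)"
    unfolding D(3) using D(1) by (rule real_projection_threshold_op)
  moreover have "bounded_error n f (\<lambda>x y. quadratic_form (2^(e * k + e * k)) (threshold_op D k t)
      (tensor_vec (2^(e * k)) (tensor_power D k (\<psi> x)) (tensor_power D k (\<phi> y))))"
  proof (rule bounded_error_cong[OF err])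
    fix x y :: "bool list" assume xy: "length x = n" "length y = n"
    show "measure_pmf.prob (binomial_pmf k ((1 + (\<Sum>a<2^e. \<psi> x a * \<phi> y a)\<^sup>2) / 2)) {j. t \<le> real j}
        = quadratic_form (2^(e * k + e * k)) (threshold_op D k t)
            (tensor_vec (2^(e * k)) (tensor_power D k (\<psi> x)) (tensor_power D k (\<phi> y)))"
      unfolding D(2,3) quadratic_form_threshold_op[OF D(1) \<psi>[OF xy(1)] \<phi>[OF xy(2)]] by (simp add: D_def)
  qed
  ultimately show ?thesis
    by (rule Q_smp_le_real_protocol[where qa="e * k" and qb="e * k"])
qed

section \<open>Public-coin protocols and Newman's theorem\<close>

lemma R_smp_pub_attained: "\<exists>ca cb R A B g. ca + cb = R_smp_pub n f \<and> pub_smp_protocol n f ca cb R A B g"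
proof -
  have "pub_smp_protocol n f n n (return_pmf 0) (\<lambda>x r. x) (\<lambda>y r. y) (\<lambda>a b. return_pmf (f a b))"
    by (simp add: pub_smp_protocol_def measure_return)
  then have "\<exists>c ca cb R A B g. ca + cb = c \<and> pub_smp_protocol n f ca cb R A B g"
    by blast
  then show ?thesis
    unfolding R_smp_pub_def by (rule LeastI_ex)
qed

lemma bounded_error_pub_smp_protocol:
  assumes "pub_smp_protocol n f ca cb R A B g"
  shows "bounded_error n f (\<lambda>x y. measure_pmf.expectation R (\<lambda>r. pmf (g (A x r) (B y r)) True))"
  unfolding bounded_error_def
proof (intro allI impI)
  fix x y :: "bool list" assume xy: "length x = n" "length y = n"
  let ?E = "\<lambda>b. measure_pmf.expectation R (\<lambda>r. pmf (g (A x r) (B y r)) b)"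
  have correct: "2/3 \<le> ?E (f x y)"
    using assms xy by (simp add: pub_smp_protocol_def measure_pmf_single pmf_bind)
  have "integrable (measure_pmf R) (\<lambda>r. pmf (g (A x r) (B y r)) True)"
    by (rule measure_pmf.integrable_const_bound[where B=1]) (auto simp: pmf_le_1)
  then have "?E False = 1 - ?E True"
    by (simp add: pmf_False_conv_True measure_pmf.prob_space)
  then show "if f x y then 2/3 \<le> ?E True else ?E True \<le> 1/3"
    using correct by (cases "f x y") auto
qed

lemma hoeffding_sample_mean:
  fixes R :: "'a pmf" and h :: "'a \<Rightarrow> real" and m :: nat and \<epsilon> :: real
  assumes h: "\<And>r. h r \<in> {0..1}" and m: "0 < m" and \<epsilon>: "0 \<le> \<epsilon>"
  defines "M \<equiv> Pi_pmf {..<m} undefined (\<lambda>_. R)"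
  shows "measure_pmf.prob M {\<omega>. (\<Sum>i<m. h (\<omega> i)) / m \<le> measure_pmf.expectation R h - \<epsilon>} \<le> exp (- 2 * m * \<epsilon>\<^sup>2)"
    and "measure_pmf.prob M {\<omega>. (\<Sum>i<m. h (\<omega> i)) / m \<ge> measure_pmf.expectation R h + \<epsilon>} \<le> exp (- 2 * m * \<epsilon>\<^sup>2)"
proof -
  have component: "map_pmf (\<lambda>\<omega>. \<omega> i) M = R" if "i < m" for i
    unfolding M_def using that by (subst Pi_pmf_component) auto
  have distr_component: "distr (measure_pmf M) borel (\<lambda>\<omega>. h (\<omega> i)) = distr (measure_pmf R) borel h"
    if "i < m" for i
  proof -
    have "distr (measure_pmf M) borel (\<lambda>\<omega>. h (\<omega> i)) = distr (measure_pmf (map_pmf (\<lambda>\<omega>. \<omega> i) M)) borel h"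
      unfolding map_pmf_rep_eq by (subst distr_distr) (auto simp: o_def)
    then show ?thesis
      using component[OF that] by simp
  qed
  interpret Hoeffding_ineq_iid "measure_pmf M" "{..<m}" "\<lambda>i \<omega>. h (\<omega> i)" "\<lambda>\<omega>. h (\<omega> 0)" 0 1
    "measure_pmf.expectation M (\<lambda>\<omega>. h (\<omega> 0))"
  proof unfold_locales
    show "prob_space.indep_vars (measure_pmf M) (\<lambda>_. borel) (\<lambda>i \<omega>. h (\<omega> i)) {..<m}"
      unfolding M_def
      by (intro prob_space.indep_vars_compose2[OF _ indep_vars_Pi_pmf, where Y="\<lambda>_. h"])
         (auto simp: measure_pmf.prob_space_axioms)
  qed (use h m distr_component in auto)
  have "measure_pmf.expectation M (\<lambda>\<omega>. h (\<omega> 0)) = measure_pmf.expectation (map_pmf (\<lambda>\<omega>. \<omega> 0) M) h"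
    by simp
  then have mean: "measure_pmf.expectation M (\<lambda>\<omega>. h (\<omega> 0)) = measure_pmf.expectation R h"
    using component[OF m] by simp
  have "{..<m} \<noteq> {}"
    using m by auto
  then show "measure_pmf.prob M {\<omega>. (\<Sum>i<m. h (\<omega> i)) / m \<le> measure_pmf.expectation R h - \<epsilon>} \<le> exp (- 2 * m * \<epsilon>\<^sup>2)"
    and "measure_pmf.prob M {\<omega>. (\<Sum>i<m. h (\<omega> i)) / m \<ge> measure_pmf.expectation R h + \<epsilon>} \<le> exp (- 2 * m * \<epsilon>\<^sup>2)"
    using Hoeffding_ineq_le'[OF \<epsilon>] Hoeffding_ineq_ge'[OF \<epsilon>] mean by simp_all
qed

lemma four_less_exp_32_9: "(4::real) < exp (32/9)"
  using exp_ge_add_one_self[of "32/9::real"] by simp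

lemma four_power_exp_less_one:
  fixes n m :: nat
  assumes "1 \<le> n" "256 * n \<le> m"
  shows "4 ^ n * exp (- real m / 72) < 1"
proof -
  have "(4::real) ^ n < exp (32/9) ^ n"
    using assms(1) four_less_exp_32_9 by (intro power_strict_mono) auto
  also have "\<dots> = exp (real n * (32/9))"
    by (rule exp_of_nat_mult[symmetric])
  also have "\<dots> \<le> exp (real m / 72)"
    using assms(2) by simp
  finally show ?thesis
    by (simp add: exp_minus field_simps)
qed

lemma sample_mean_gap_failure:
  fixes R :: "'a pmf" and h :: "'a \<Rightarrow> real" and m :: nat
  assumes h: "\<And>r. h r \<in> {0..1}" and m: "0 < m"
    and E: "if b then 2/3 \<le> measure_pmf.expectation R h else measure_pmf.expectation R h \<le> 1/3"
  shows "measure_pmf.prob (Pi_pmf {..<m} undefined (\<lambda>_. R))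
    {\<omega>. \<not> (if b then 7/12 \<le> (\<Sum>i<m. h (\<omega> i)) / m else (\<Sum>i<m. h (\<omega> i)) / m \<le> 5/12)}
    \<le> exp (- real m / 72)"
    (is "measure_pmf.prob ?M ?bad \<le> _")
proof -
  let ?E = "measure_pmf.expectation R h"
  let ?tail = "if b then {\<omega>. (\<Sum>i<m. h (\<omega> i)) / m \<le> ?E - 1/12} else {\<omega>. (\<Sum>i<m. h (\<omega> i)) / m \<ge> ?E + 1/12}"
  have "{\<omega>. \<not> (if b then 7/12 \<le> A \<omega> else A \<omega> \<le> 5/12)}
      \<subseteq> (if b then {\<omega>. A \<omega> \<le> ?E - 1/12} else {\<omega>. A \<omega> \<ge> ?E + 1/12})" for A :: "(nat \<Rightarrow> 'a) \<Rightarrow> real"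
    using E by (cases b) auto
  then have "measure_pmf.prob ?M ?bad \<le> measure_pmf.prob ?M ?tail"
    by (intro measure_pmf.finite_measure_mono) simp_all
  also have "\<dots> \<le> exp (- 2 * real m * (1/12)\<^sup>2)"
    using hoeffding_sample_mean[OF h m, of "1/12"] by (cases b) simp_all
  also have "\<dots> = exp (- real m / 72)"
    by (simp add: power2_eq_square)
  finally show ?thesis .
qed

text \<open>Newman's argument: m = O(n) independent samples of the public coin are simultaneously
  good for all 4^n inputs, by Hoeffding and a union bound.\<close>
lemma newman_derandomization:
  fixes R :: "'a pmf" and h :: "bool list \<Rightarrow> bool list \<Rightarrow> 'a \<Rightarrow> real" and n m :: nat
  assumes h: "\<And>x y r. h x y r \<in> {0..1}"
    and err: "bounded_error n f (\<lambda>x y. measure_pmf.expectation R (h x y))"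
    and n: "1 \<le> n" and m: "256 * n \<le> m"
  obtains \<omega> where "\<And>x y. length x = n \<Longrightarrow> length y = n \<Longrightarrow>
    (if f x y then 7/12 \<le> (\<Sum>i<m. h x y (\<omega> i)) / m else (\<Sum>i<m. h x y (\<omega> i)) / m \<le> 5/12)"
proof -
  have m0: "0 < m"
    using n m by linarith
  define M where "M = Pi_pmf {..<m} undefined (\<lambda>_. R)"
  define L where "L = {xs :: bool list. length xs = n}"
  have L: "finite L" "card L = 2^n"
    using finite_lists_length_eq[of "UNIV :: bool set" n] card_lists_length_eq[of "UNIV :: bool set" n]
    by (simp_all add: L_def)
  define bad where "bad p = {\<omega>. \<not> (if f (fst p) (snd p) then 7/12 \<le> (\<Sum>i<m. h (fst p) (snd p) (\<omega> i)) / m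
    else (\<Sum>i<m. h (fst p) (snd p) (\<omega> i)) / m \<le> 5/12)}" for p
  have bad: "measure_pmf.prob M (bad p) \<le> exp (- real m / 72)" if "p \<in> L \<times> L" for p
  proof -
    obtain x y where p: "p = (x, y)" and xy: "length x = n" "length y = n"
      using \<open>p \<in> L \<times> L\<close> by (cases p) (simp add: L_def)
    show ?thesis
      unfolding M_def bad_def p fst_conv snd_conv
      by (rule sample_mean_gap_failure[OF h m0 bounded_errorD[OF err xy]])
  qed
  have "measure_pmf.prob M (\<Union>p\<in>L \<times> L. bad p) \<le> (\<Sum>p\<in>L \<times> L. measure_pmf.prob M (bad p))"
    by (rule measure_subadditive_finite) (use L in auto)
  also have "\<dots> \<le> (\<Sum>p\<in>L \<times> L. exp (- real m / 72))"
    by (rule sum_mono) (rule bad)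
  also have "\<dots> = 4 ^ n * exp (- real m / 72)"
    using L by (simp add: card_cartesian_product power_mult_distrib[symmetric])
  also have "\<dots> < 1"
    using n m by (rule four_power_exp_less_one)
  finally have "(\<Union>p\<in>L \<times> L. bad p) \<noteq> UNIV"
    using measure_pmf.prob_space[of M] by auto
  then obtain \<omega> where \<omega>: "\<omega> \<notin> (\<Union>p\<in>L \<times> L. bad p)"
    by blast
  show ?thesis
  proof (rule that)
    fix x y :: "bool list" assume "length x = n" "length y = n"
    then have "\<omega> \<notin> bad (x, y)"
      using \<omega> by (simp add: L_def)
    then show "if f x y then 7/12 \<le> (\<Sum>i<m. h x y (\<omega> i)) / m else (\<Sum>i<m. h x y (\<omega> i)) / m \<le> 5/12"
      by (simp add: bad_def cong: if_cong)
  qed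
qed

lemma pub_smp_protocol_fixed_seeds:
  assumes P: "pub_smp_protocol n f ca cb R A B g" and n: "1 \<le> n" and m: "256 * n \<le> m"
  obtains \<omega> where "\<And>x y. length x = n \<Longrightarrow> length y = n \<Longrightarrow>
    (if f x y then 7/12 \<le> (\<Sum>i<m. pmf (g (A x (\<omega> i)) (B y (\<omega> i))) True) / m
     else (\<Sum>i<m. pmf (g (A x (\<omega> i)) (B y (\<omega> i))) True) / m \<le> 5/12)"
proof -
  have "pmf (g (A x r) (B y r)) True \<in> {0..1}" for x y r
    by (simp add: pmf_le_1)
  from newman_derandomization[OF this bounded_error_pub_smp_protocol[OF P] n m] that show ?thesis
    by blast
qed

lemma mean_in_unit_interval:
  fixes a :: "nat \<Rightarrow> real"
  assumes "\<And>i. a i \<in> {0..1}"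
  shows "(\<Sum>i<m. a i) / m \<in> {0..1}"
proof -
  have "(\<Sum>i<m. a i) \<le> (\<Sum>i<m. 1)"
    using assms by (intro sum_mono) simp
  then show ?thesis
    using assms by (cases "m = 0") (auto simp: sum_nonneg divide_le_eq_1)
qed

section \<open>From classical messages to quantum states\<close>

text \<open>Alice's states are basis vectors; Bob's state carries the column G(-, b), scaled by
  1/sqrt(2^l) so that it fits into a unit vector, plus one slack coordinate.\<close>
lemma gram_encoding:
  fixes G :: "bool list \<Rightarrow> 'b \<Rightarrow> real"
  assumes G: "\<And>a b. \<bar>G a b\<bar> \<le> 1"
  obtains s t where "\<And>a. length a = l \<Longrightarrow> unit_vector (2^(l+1)) (s a)"
    and "\<And>b. unit_vector (2^(l+1)) (t b)"
    and "\<And>a b. length a = l \<Longrightarrow> (\<Sum>j<2^(l+1). s a j * t b j) = G a b / sqrt (2^l)"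
proof
  let ?N = "2^l :: nat" and ?enc = "\<lambda>a. horner_sum of_bool 2 a :: nat"
  let ?dec = "\<lambda>j. map (bit j) [0..<l]"
  define \<kappa> :: real where "\<kappa> = 1 / sqrt ?N"
  define S where "S b = (\<Sum>j<?N. (G (?dec j) b)\<^sup>2)" for b
  have slack: "\<kappa>\<^sup>2 * S b \<le> 1" for b
  proof -
    have "S b \<le> (\<Sum>j<?N. 1)"
      unfolding S_def using G by (intro sum_mono) (simp add: abs_square_le_1)
    then show ?thesis
      by (simp add: \<kappa>_def power_divide field_simps)
  qed
  define s where "s a j = (of_bool (j = ?enc a) :: real)" for a j
  define t where "t b j = (if j < ?N then \<kappa> * G (?dec j) b else if j = ?N then sqrt (1 - \<kappa>\<^sup>2 * S b) else 0)"
    for b j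
  have enc: "?enc a < 2^(l+1)" "?enc a < ?N" if "length a = l" for a
    using horner_sum_bound[where 'a=nat, of a] that by simp_all
  show "unit_vector (2^(l+1)) (s a)" if "length a = l" for a
    unfolding s_def using enc(1)[OF that] by (rule unit_vector_indicator)
  show "unit_vector (2^(l+1)) (t b)" for b
  proof -
    have "(\<Sum>j<2^(l+1). (t b j)\<^sup>2) = (\<Sum>u<2. \<Sum>w<?N. (t b (u * ?N + w))\<^sup>2)"
      using sum_lessThan_mult[of "\<lambda>j. (t b j)\<^sup>2" 2 ?N] by simp
    also have "\<dots> = (\<Sum>w<?N. (t b w)\<^sup>2) + (\<Sum>w<?N. (t b (?N + w))\<^sup>2)"
      by (simp add: numeral_2_eq_2 add.commute)
    also have "(\<Sum>w<?N. (t b w)\<^sup>2) = \<kappa>\<^sup>2 * S b"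
      by (simp add: t_def S_def power_mult_distrib sum_distrib_left)
    also have "(\<Sum>w<?N. (t b (?N + w))\<^sup>2) = (\<Sum>w<?N. of_bool (w = 0) * (1 - \<kappa>\<^sup>2 * S b))"
      using slack[of b] by (intro sum.cong refl) (simp add: t_def)
    also have "\<dots> = 1 - \<kappa>\<^sup>2 * S b"
      by (simp add: sum_indicator_mult)
    finally show ?thesis
      by (simp add: unit_vector_def)
  qed
  show "(\<Sum>j<2^(l+1). s a j * t b j) = G a b / sqrt (2^l)" if "length a = l" for a b
    using enc[OF that] that map_bit_horner_sum[of a]
    by (simp add: s_def sum_indicator_mult t_def \<kappa>_def)
qed

lemma gram_encoding_min:
  fixes G :: "bool list \<Rightarrow> bool list \<Rightarrow> real" and ca cb :: nat
  assumes G: "\<And>a b. \<bar>G a b\<bar> \<le> 1"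
  defines "l \<equiv> min ca cb"
  obtains u w where "\<And>a. length a = ca \<Longrightarrow> unit_vector (2^(l+1)) (u a)"
    and "\<And>b. length b = cb \<Longrightarrow> unit_vector (2^(l+1)) (w b)"
    and "\<And>a b. length a = ca \<Longrightarrow> length b = cb \<Longrightarrow> (\<Sum>j<2^(l+1). u a j * w b j) = G a b / sqrt (2^l)"
proof (cases "ca \<le> cb")
  case True
  obtain s t where "\<And>a. length a = ca \<Longrightarrow> unit_vector (2^(ca+1)) (s a)"
    "\<And>b. unit_vector (2^(ca+1)) (t b)"
    "\<And>a b. length a = ca \<Longrightarrow> (\<Sum>j<2^(ca+1). s a j * t b j) = G a b / sqrt (2^ca)"
    using gram_encoding[of G ca] G by blast
  moreover have "l = ca"
    using True by (simp add: l_def)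
  ultimately show ?thesis
    using that[of s t] by simp
next
  case False
  obtain s t where "\<And>b. length b = cb \<Longrightarrow> unit_vector (2^(cb+1)) (s b)"
    "\<And>a. unit_vector (2^(cb+1)) (t a)"
    "\<And>b a. length b = cb \<Longrightarrow> (\<Sum>j<2^(cb+1). s b j * t a j) = G a b / sqrt (2^cb)"
    using gram_encoding[of "\<lambda>b a. G a b" cb] G by blast
  moreover have "l = cb"
    using False by (simp add: l_def)
  ultimately show ?thesis
    using that[of t s] by (simp add: mult.commute)
qed

definition block_vec :: "nat \<Rightarrow> nat \<Rightarrow> (nat \<Rightarrow> nat \<Rightarrow> real) \<Rightarrow> nat \<Rightarrow> real" where
  "block_vec m d v j = v (j div d) (j mod d) / sqrt m"

lemma inner_block_vec:
  "(\<Sum>j<m * d. block_vec m d v j * block_vec m d v' j) = (\<Sum>i<m. \<Sum>j<d. v i j * v' i j) / m"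
proof -
  have "(\<Sum>j<m * d. block_vec m d v j * block_vec m d v' j)
      = (\<Sum>j<m * d. v (j div d) (j mod d) * v' (j div d) (j mod d) / m)"
    by (simp add: block_vec_def)
  also have "\<dots> = (\<Sum>i<m. \<Sum>j<d. v i j * v' i j / m)"
    by (rule sum_lessThan_mult_div_mod[where G="\<lambda>i j. v i j * v' i j / m"])
  finally show ?thesis
    by (simp add: sum_divide_distrib)
qed

lemma unit_vector_block_vec:
  assumes "0 < m" "\<And>i. i < m \<Longrightarrow> unit_vector d (v i)"
  shows "unit_vector (m * d) (block_vec m d v)"
  using inner_block_vec[of m d v v] assms by (simp add: unit_vector_def power2_eq_square)

lemma binomial_threshold:
  fixes k :: nat and p \<tau> \<delta> :: real
  assumes k: "0 < k" and p: "p \<in> {0..1}" and \<delta>: "0 \<le> \<delta>" and small: "exp (- 2 * real k * \<delta>\<^sup>2) \<le> 1/3"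
  shows "\<tau> \<le> p - \<delta> \<Longrightarrow> 2/3 \<le> measure_pmf.prob (binomial_pmf k p) {j. k * \<tau> \<le> real j}"
    and "p + \<delta> \<le> \<tau> \<Longrightarrow> measure_pmf.prob (binomial_pmf k p) {j. k * \<tau> \<le> real j} \<le> 1/3"
proof -
  interpret binomial_distribution k p
    using p by unfold_locales
  have exp_eq: "exp (real_of_int (- 2 * int k) * \<delta>\<^sup>2) = exp (- 2 * real k * \<delta>\<^sup>2)"
    by simp
  show "2/3 \<le> measure_pmf.prob (binomial_pmf k p) {j. k * \<tau> \<le> real j}" if "\<tau> \<le> p - \<delta>"
  proof -
    have "k * \<tau> \<le> k * (p - \<delta>)"
      using that by (simp add: mult_left_mono)
    then have "UNIV - {j. k * \<tau> \<le> real j} \<subseteq> {j. real j / k \<le> p - \<delta>}"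
      using k by (auto simp: field_simps)
    then have "measure_pmf.prob (binomial_pmf k p) (UNIV - {j. k * \<tau> \<le> real j})
        \<le> measure_pmf.prob (binomial_pmf k p) {j. real j / k \<le> p - \<delta>}"
      by (rule measure_pmf.finite_measure_mono) simp
    also have "\<dots> \<le> 1/3"
      using prob_le'[OF k \<delta>] small unfolding exp_eq by simp
    finally show ?thesis
      using measure_pmf.prob_compl[of "{j. k * \<tau> \<le> real j}" "binomial_pmf k p"] by simp
  qed
  show "measure_pmf.prob (binomial_pmf k p) {j. k * \<tau> \<le> real j} \<le> 1/3" if "p + \<delta> \<le> \<tau>"
  proof -
    have "k * (p + \<delta>) \<le> k * \<tau>"
      using that by (simp add: mult_left_mono)
    then have "{j. k * \<tau> \<le> real j} \<subseteq> {j. real j / k \<ge> p + \<delta>}"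
      using k by (auto simp: field_simps)
    then have "measure_pmf.prob (binomial_pmf k p) {j. k * \<tau> \<le> real j}
        \<le> measure_pmf.prob (binomial_pmf k p) {j. real j / k \<ge> p + \<delta>}"
      by (rule measure_pmf.finite_measure_mono) simp
    also have "\<dots> \<le> 1/3"
      using prob_ge'[OF k \<delta>] small unfolding exp_eq by simp
    finally show ?thesis .
  qed
qed

lemma swap_test_separation:
  fixes P L :: real
  assumes P: "0 \<le> P" and L: "1 \<le> L"
  defines "p \<equiv> (1 + (P / sqrt L)\<^sup>2) / 2" and "\<tau> \<equiv> 1/2 + 37 / (288 * L)" and "\<delta> \<equiv> 1 / (24 * L)"
  shows "7/12 \<le> P \<Longrightarrow> \<tau> \<le> p - \<delta>"
    and "P \<le> 5/12 \<Longrightarrow> p + \<delta> \<le> \<tau>"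
proof -
  have p: "p = 1/2 + P\<^sup>2 / (2 * L)"
    using L by (simp add: p_def power_divide)
  show "\<tau> \<le> p - \<delta>" if "7/12 \<le> P"
  proof -
    have "(7/12)\<^sup>2 \<le> P\<^sup>2"
      using that by (intro power_mono) auto
    then show ?thesis
      using L by (simp add: \<tau>_def p \<delta>_def field_simps power2_eq_square)
  qed
  show "p + \<delta> \<le> \<tau>" if "P \<le> 5/12"
  proof -
    have "P\<^sup>2 \<le> (5/12)\<^sup>2"
      using that P by (intro power_mono) auto
    then show ?thesis
      using L by (simp add: \<tau>_def p \<delta>_def field_simps power2_eq_square)
  qed
qed

lemma swap_test_repetitions:
  "exp (- 2 * real ((2::nat)^(2 * l + 10)) * (1 / (24 * 2^l))\<^sup>2) \<le> (1/3 :: real)"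
proof -
  have "- 2 * real ((2::nat)^(2 * l + 10)) * (1 / (24 * 2^l))\<^sup>2 = - (32/9 :: real)"
    by (simp add: power_add power_mult power2_eq_square field_simps)
  then have "exp (- 2 * real ((2::nat)^(2 * l + 10)) * (1 / (24 * 2^l))\<^sup>2) = inverse (exp (32/9))"
    by (simp add: exp_minus)
  also have "\<dots> \<le> inverse 3"
    using four_less_exp_32_9 by (intro le_imp_inverse_le) auto
  finally show ?thesis
    by simp
qed

text \<open>One swap test accepts with probability (1 + P^2/L)/2, which differs by at least
  1/(12 L) between P \<ge> 7/12 and P \<le> 5/12; k = 1024 L^2 repetitions separate the two cases.\<close>
lemma swap_test_threshold_gap:
  fixes P :: real and l :: nat
  assumes P: "0 \<le> P" "P \<le> 1"
  defines "L \<equiv> (2::real)^l" and "k \<equiv> (2::nat)^(2 * l + 10)"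
  defines "\<tau> \<equiv> 1/2 + 37 / (288 * L)"
  shows "7/12 \<le> P \<Longrightarrow> 2/3 \<le> measure_pmf.prob (binomial_pmf k ((1 + (P / sqrt L)\<^sup>2) / 2)) {j. k * \<tau> \<le> real j}"
    and "P \<le> 5/12 \<Longrightarrow> measure_pmf.prob (binomial_pmf k ((1 + (P / sqrt L)\<^sup>2) / 2)) {j. k * \<tau> \<le> real j} \<le> 1/3"
proof -
  have L: "1 \<le> L"
    by (simp add: L_def)
  have "P\<^sup>2 \<le> 1"
    using P by (simp add: power_le_one)
  then have p: "(1 + (P / sqrt L)\<^sup>2) / 2 \<in> {0..1}"
    using L by (simp add: power_divide field_simps)
  have k: "0 < k"
    by (simp add: k_def)
  note threshold = binomial_threshold[OF k p _ swap_test_repetitions[of l, folded k_def L_def]]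
  show "7/12 \<le> P \<Longrightarrow> 2/3 \<le> measure_pmf.prob (binomial_pmf k ((1 + (P / sqrt L)\<^sup>2) / 2)) {j. k * \<tau> \<le> real j}"
    using threshold(1) swap_test_separation(1)[OF P(1) L] L unfolding \<tau>_def by simp
  show "P \<le> 5/12 \<Longrightarrow> measure_pmf.prob (binomial_pmf k ((1 + (P / sqrt L)\<^sup>2) / 2)) {j. k * \<tau> \<le> real j} \<le> 1/3"
    using threshold(2) swap_test_separation(2)[OF P(1) L] L unfolding \<tau>_def by simp
qed

lemma Q_smp_le_inner_product_gap:
  fixes P :: "bool list \<Rightarrow> bool list \<Rightarrow> real"
  assumes unit_\<psi>: "\<And>x. length x = n \<Longrightarrow> unit_vector (2^e) (\<psi> x)"
    and unit_\<phi>: "\<And>y. length y = n \<Longrightarrow> unit_vector (2^e) (\<phi> y)"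
    and inner: "\<And>x y. length x = n \<Longrightarrow> length y = n \<Longrightarrow> (\<Sum>a<2^e. \<psi> x a * \<phi> y a) = P x y / sqrt (2^l)"
    and P: "\<And>x y. length x = n \<Longrightarrow> length y = n \<Longrightarrow> P x y \<in> {0..1}"
    and gap: "\<And>x y. length x = n \<Longrightarrow> length y = n \<Longrightarrow> (if f x y then 7/12 \<le> P x y else P x y \<le> 5/12)"
  shows "Q_smp n f \<le> 2 * (e * 2^(2 * l + 10))"
proof -
  let ?k = "2^(2 * l + 10) :: nat" and ?t = "2^(2 * l + 10) * (1/2 + 37 / (288 * 2^l)) :: real"
  have err: "bounded_error n f
      (\<lambda>x y. measure_pmf.prob (binomial_pmf ?k ((1 + (\<Sum>a<2^e. \<psi> x a * \<phi> y a)\<^sup>2) / 2)) {j. ?t \<le> real j})"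
    unfolding bounded_error_def
  proof (intro allI impI)
    fix x y :: "bool list" assume xy: "length x = n" "length y = n"
    have "0 \<le> P x y" "P x y \<le> 1"
      using P[OF xy] by simp_all
    from swap_test_threshold_gap[OF this, of l] gap[OF xy]
    show "if f x y
        then 2/3 \<le> measure_pmf.prob (binomial_pmf ?k ((1 + (\<Sum>a<2^e. \<psi> x a * \<phi> y a)\<^sup>2) / 2)) {j. ?t \<le> real j}
        else measure_pmf.prob (binomial_pmf ?k ((1 + (\<Sum>a<2^e. \<psi> x a * \<phi> y a)\<^sup>2) / 2)) {j. ?t \<le> real j} \<le> 1/3"
      unfolding inner[OF xy] by (cases "f x y") simp_all
  qed
  have "Q_smp n f \<le> e * ?k + e * ?k"
    using unit_\<psi> unit_\<phi> err by (rule Q_smp_le_swap_test_protocol[where n=n and e=e])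
  then show ?thesis
    by (simp only: mult_2)
qed

lemma Q_smp_le_pub_protocol_samples:
  assumes P: "pub_smp_protocol n f ca cb R A B g" and n: "1 \<le> n" and m: "256 * n \<le> 2^s"
  shows "Q_smp n f \<le> 2 * ((s + min ca cb + 1) * 2^(2 * min ca cb + 10))"
proof -
  define l where "l = min ca cb"
  define m :: nat where "m = 2^s"
  define D where "D = (2::nat)^(l+1)"
  define pg where "pg a b = pmf (g a b) True" for a b
  have pg: "pg a b \<in> {0..1}" for a b
    by (simp add: pg_def pmf_le_1)
  have len: "length (A x r) = ca" "length (B y r) = cb" if "length x = n" "length y = n" for x y r
    using P that by (simp_all add: pub_smp_protocol_def)
  obtain \<omega> where \<omega>: "\<And>x y. length x = n \<Longrightarrow> length y = n \<Longrightarrow>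
      (if f x y then 7/12 \<le> (\<Sum>i<m. pg (A x (\<omega> i)) (B y (\<omega> i))) / m
       else (\<Sum>i<m. pg (A x (\<omega> i)) (B y (\<omega> i))) / m \<le> 5/12)"
    using pub_smp_protocol_fixed_seeds[OF P n, of m] m unfolding pg_def m_def by blast
  obtain u w where u: "\<And>a. length a = ca \<Longrightarrow> unit_vector D (u a)"
    and w: "\<And>b. length b = cb \<Longrightarrow> unit_vector D (w b)"
    and uw: "\<And>a b. length a = ca \<Longrightarrow> length b = cb \<Longrightarrow> (\<Sum>j<D. u a j * w b j) = pg a b / sqrt (2^l)"
  proof -
    have "\<bar>pg a b\<bar> \<le> 1" for a b
      using pg[of a b] by simp
    from gram_encoding_min[of pg, OF this] that show ?thesis
      unfolding D_def l_def by blast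
  qed
  have mD: "m * D = 2^(s + l + 1)"
    by (simp add: m_def D_def power_add)
  have "Q_smp n f \<le> 2 * ((s + l + 1) * 2^(2 * l + 10))"
  proof (rule Q_smp_le_inner_product_gap[where \<psi>="\<lambda>x. block_vec m D (\<lambda>i. u (A x (\<omega> i)))"
        and \<phi>="\<lambda>y. block_vec m D (\<lambda>i. w (B y (\<omega> i)))"])
    show "unit_vector (2^(s + l + 1)) (block_vec m D (\<lambda>i. u (A x (\<omega> i))))" if "length x = n" for x
      unfolding mD[symmetric] using that by (intro unit_vector_block_vec u) (simp_all add: m_def len)
    show "unit_vector (2^(s + l + 1)) (block_vec m D (\<lambda>i. w (B y (\<omega> i))))" if "length y = n" for y
      unfolding mD[symmetric] using that by (intro unit_vector_block_vec w) (simp_all add: m_def len)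
    show "(\<Sum>a<2^(s + l + 1). block_vec m D (\<lambda>i. u (A x (\<omega> i))) a * block_vec m D (\<lambda>i. w (B y (\<omega> i))) a)
        = (\<Sum>i<m. pg (A x (\<omega> i)) (B y (\<omega> i))) / m / sqrt (2^l)" if "length x = n" "length y = n" for x y
      unfolding mD[symmetric] inner_block_vec using that by (simp add: uw len sum_divide_distrib[symmetric])
    show "(\<Sum>i<m. pg (A x (\<omega> i)) (B y (\<omega> i))) / m \<in> {0..1}" for x y
      using pg by (rule mean_in_unit_interval)
    show "if f x y then 7/12 \<le> (\<Sum>i<m. pg (A x (\<omega> i)) (B y (\<omega> i))) / m
        else (\<Sum>i<m. pg (A x (\<omega> i)) (B y (\<omega> i))) / m \<le> 5/12"
      if "length x = n" "length y = n" for x y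
      using \<omega>[OF that] .
  qed
  then show ?thesis
    by (simp only: l_def)
qed

lemma Q_smp_le_pub_protocol:
  assumes P: "pub_smp_protocol n f ca cb R A B g" and n: "2 \<le> n" and small: "2^(ca + cb) < n"
  shows "real (Q_smp n f) \<le> 24576 * 2^(ca + cb) * log 2 n"
proof -
  define j where "j = nat \<lceil>log 2 n\<rceil>"
  define l where "l = min ca cb"
  have logn: "1 \<le> log 2 n"
    using n by simp
  have "log 2 n \<le> j"
    unfolding j_def by linarith
  then have "real n \<le> 2^j"
    using n by (simp add: log_le_iff powr_realpow)
  then have "256 * n \<le> 2^(j + 8)"
    by (simp add: power_add)
  with n have Q: "Q_smp n f \<le> 2 * ((j + 8 + l + 1) * 2^(2 * l + 10))"
    unfolding l_def by (intro Q_smp_le_pub_protocol_samples[OF P]) simp_all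
  have "(2::nat)^l < n"
    using small by (rule le_less_trans[rotated]) (simp add: l_def)
  then have "real l < log 2 n"
    by (rule less_log2_of_power)
  moreover have "real j \<le> log 2 n + 1"
    unfolding j_def using logn by linarith
  ultimately have qubits: "real (j + 8 + l + 1) \<le> 12 * log 2 n"
    using logn by simp
  have "(2::nat)^(2 * l + 10) \<le> 2^(ca + cb + 10)"
    by (intro power_increasing) (auto simp: l_def)
  then have "(2::nat)^(2 * l + 10) \<le> 1024 * 2^(ca + cb)"
    by (simp add: power_add)
  then have copies: "real (2^(2 * l + 10)) \<le> 1024 * 2^(ca + cb)"
    by (metis of_nat_le_iff of_nat_mult of_nat_numeral of_nat_power)
  have "real (Q_smp n f) \<le> real (2 * ((j + 8 + l + 1) * 2^(2 * l + 10)))"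
    using Q by (simp only: of_nat_le_iff)
  also have "\<dots> = 2 * (real (j + 8 + l + 1) * real (2^(2 * l + 10)))"
    by (simp only: of_nat_mult of_nat_numeral)
  also have "\<dots> \<le> 2 * ((12 * log 2 n) * (1024 * 2^(ca + cb)))"
    using qubits copies by (intro mult_left_mono mult_mono) auto
  finally show ?thesis
    by (simp add: mult_ac)
qed

theorem mainTheorem3:
  "\<exists>C::real. C > 0 \<and>
     (\<forall>n::nat. \<forall>f :: bool list \<Rightarrow> bool list \<Rightarrow> bool. n \<ge> 2 \<longrightarrow>
        real (Q_smp n f) \<le> C * 2 ^ R_smp_pub n f * log 2 (real n))"
proof (intro exI[of _ 24576] conjI allI impI)
  fix n :: nat and f :: "bool list \<Rightarrow> bool list \<Rightarrow> bool"
  assume n: "2 \<le> n"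
  obtain ca cb R A B g where c: "ca + cb = R_smp_pub n f" and P: "pub_smp_protocol n f ca cb R A B g"
    using R_smp_pub_attained by blast
  show "real (Q_smp n f) \<le> 24576 * 2 ^ R_smp_pub n f * log 2 (real n)"
  proof (cases "2^(ca + cb) < n")
    case True
    then show ?thesis
      using Q_smp_le_pub_protocol[OF P n] c by simp
  next
    case False
    then have "real n \<le> 2^(ca + cb)"
      by (metis not_less of_nat_le_iff of_nat_numeral of_nat_power)
    have "real (Q_smp n f) \<le> real (n + n)"
      using Q_smp_le_trivial[of n f] by (simp only: of_nat_le_iff)
    also have "\<dots> \<le> 24576 * 2^(ca + cb) * 1"
      using \<open>real n \<le> 2^(ca + cb)\<close> by linarith
    also have "\<dots> \<le> 24576 * 2^(ca + cb) * log 2 n"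
      using n by (intro mult_left_mono) auto
    finally show ?thesis
      using c by simp
  qed
qed simp

end
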